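(* Let $A$ be a bounded linear operator on a complex Hilbert space $\mathcal{H}$ which is irreducible, i.e. the only orthogonal projections commuting with $A$ are $0$ and $I$. Let $N(A)$ denote the set of all bounded normal operators $M$ on $\mathcal{H}$ with $AM = MA$. Then \[ \inf_{M \in N(A)} \|A + M\| = \inf_{\lambda \in \mathbb{C}} \|A - \lambda I\| . \] *)

theory Defs
  imports "HOL-Analysis.Analysis"
begin

class scaleC = scaleR +
  fixes scaleC :: "complex \<Rightarrow> 'a \<Rightarrow> 'a" (infixr "*\<^sub>C" 75)
  assumes scaleR_scaleC: "scaleR r = scaleC (complex_of_real r)"

class complex_vector = scaleC + real_vector +
  assumes scaleC_add_right: "a *\<^sub>C (x + y) = a *\<^sub>C x + a *\<^sub>C y"
    and scaleC_add_left: "(a + b) *\<^sub>C x = a *\<^sub>C x + b *\<^sub>C x"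
    and scaleC_scaleC: "a *\<^sub>C (b *\<^sub>C x) = (a * b) *\<^sub>C x"
    and scaleC_one: "1 *\<^sub>C x = x"

class complex_inner = complex_vector + real_normed_vector +
  fixes cinner :: "'a \<Rightarrow> 'a \<Rightarrow> complex"
  assumes cinner_commute: "cinner x y = cnj (cinner y x)"
    and cinner_add_left: "cinner (x + y) z = cinner x z + cinner y z"
    and cinner_scaleC_left: "cinner (r *\<^sub>C x) y = cnj r * cinner x y"
    and cinner_real: "Im (cinner x x) = 0"
    and cinner_ge_zero: "0 \<le> Re (cinner x x)"
    and cinner_eq_zero_iff: "cinner x x = 0 \<longleftrightarrow> x = 0"
    and norm_eq_sqrt_cinner: "norm x = sqrt (Re (cinner x x))"

class chilbert_space = complex_inner + complete_space

definition clinear :: "('a::complex_vector \<Rightarrow> 'b::complex_vector) \<Rightarrow> bool" where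
  "clinear f \<longleftrightarrow> (\<forall>x y. f (x + y) = f x + f y) \<and> (\<forall>c x. f (c *\<^sub>C x) = c *\<^sub>C f x)"

definition bounded_clinear :: "('a::complex_inner \<Rightarrow> 'b::complex_inner) \<Rightarrow> bool" where
  "bounded_clinear f \<longleftrightarrow> clinear f \<and> (\<exists>K. \<forall>x. norm (f x) \<le> norm x * K)"

definition is_adjoint :: "('a::complex_inner \<Rightarrow> 'a) \<Rightarrow> ('a \<Rightarrow> 'a) \<Rightarrow> bool" where
  "is_adjoint A B \<longleftrightarrow> (\<forall>x y. cinner (A x) y = cinner x (B y))"

text \<open>The (Hilbert space) adjoint of a bounded operator; it exists and is unique by Riesz.\<close>
definition adjoint :: "('a::complex_inner \<Rightarrow> 'a) \<Rightarrow> ('a \<Rightarrow> 'a)" where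
  "adjoint A = (SOME B. is_adjoint A B)"

definition normal_op :: "('a::complex_inner \<Rightarrow> 'a) \<Rightarrow> bool" where
  "normal_op M \<longleftrightarrow> bounded_clinear M \<and> M \<circ> adjoint M = adjoint M \<circ> M"

definition orth_proj :: "('a::complex_inner \<Rightarrow> 'a) \<Rightarrow> bool" where
  "orth_proj P \<longleftrightarrow> bounded_clinear P \<and> P \<circ> P = P \<and> adjoint P = P"

definition irreducible_op :: "('a::complex_inner \<Rightarrow> 'a) \<Rightarrow> bool" where
  "irreducible_op A \<longleftrightarrow>
     (\<forall>P. orth_proj P \<and> P \<circ> A = A \<circ> P \<longrightarrow> P = (\<lambda>_. 0) \<or> P = id)"

definition commuting_normals :: "('a::complex_inner \<Rightarrow> 'a) \<Rightarrow> ('a \<Rightarrow> 'a) set" where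
  "commuting_normals A = {M. normal_op M \<and> A \<circ> M = M \<circ> A}"

end

theory Submission
  imports Defs "HOL-Computational_Algebra.Formal_Power_Series"
begin

text \<open>The scalars \<open>c I\<close> belong to \<open>N(A)\<close>, so the two infima agree once every normal \<open>M\<close>
  commuting with an irreducible \<open>A\<close> is scalar; this is proved without the spectral theorem or
  Fuglede's theorem. For a normal \<open>N\<close> the vectors \<open>x\<close> with \<open>\<parallel>N\<^sup>n x\<parallel> \<le> c\<^sup>n \<parallel>x\<parallel>\<close> for all \<open>n\<close>
  form a closed subspace, because \<open>n \<mapsto> \<parallel>N\<^sup>n x\<parallel>\<close> is log-convex, and it is the same subspace
  for \<open>N\<^sup>*\<close>. For \<open>N = M - \<mu>\<close> it therefore reduces \<open>A\<close> and is \<open>0\<close> or everything. If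
  \<open>\<parallel>N y\<parallel> < \<parallel>N\<parallel> \<parallel>y\<parallel>\<close> for some \<open>y\<close>, the positive part of \<open>I - N\<^sup>*N / d\<close>, obtained from the
  binomial series of the square root, yields a nonzero vector in such a subspace with
  \<open>c = sqrt d < \<parallel>N\<parallel>\<close>, which is absurd. So every \<open>(M - \<mu>)\<^sup>*(M - \<mu>)\<close> is a real scalar, and
  \<open>\<mu> = 0, 1, \<i>\<close> force \<open>M\<close> to be scalar.\<close>

instance chilbert_space \<subseteq> banach ..

lemma scaleC_zero_left [simp]: "(0::complex) *\<^sub>C (x::'a::complex_vector) = 0"
  by (metis scaleR_scaleC scaleR_zero_left of_real_0)

lemma scaleC_zero_right [simp]: "a *\<^sub>C (0::'a::complex_vector) = 0"
  using scaleC_add_right[of a 0 0] by simp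

lemma scaleC_minus_left: "(- a) *\<^sub>C (x::'a::complex_vector) = - (a *\<^sub>C x)"
  using scaleC_add_left[of "- a" a x] by (simp add: eq_neg_iff_add_eq_0)

lemma scaleC_minus_right: "a *\<^sub>C (- x::'a::complex_vector) = - (a *\<^sub>C x)"
  using scaleC_add_right[of a x "- x"] by (simp add: eq_neg_iff_add_eq_0 add.commute)

lemma scaleC_diff_right: "a *\<^sub>C (x - y::'a::complex_vector) = a *\<^sub>C x - a *\<^sub>C y"
  by (simp only: diff_conv_add_uminus scaleC_add_right scaleC_minus_right)

lemma cinner_add_right: "cinner z (x + y) = cinner z x + cinner z (y::'a::complex_inner)"
  by (metis cinner_add_left cinner_commute complex_cnj_add)

lemma cinner_scaleC_right: "cinner y (r *\<^sub>C x) = r * cinner y (x::'a::complex_inner)"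
  by (metis cinner_commute cinner_scaleC_left complex_cnj_cnj complex_cnj_mult)

lemma cinner_zero_left [simp]: "cinner 0 (x::'a::complex_inner) = 0"
  using cinner_add_left[of 0 0 x] by simp

lemma cinner_zero_right [simp]: "cinner x (0::'a::complex_inner) = 0"
  using cinner_add_right[of x 0 0] by simp

lemma cinner_minus_left: "cinner (- x) (y::'a::complex_inner) = - cinner x y"
  using cinner_add_left[of x "- x" y] by (simp add: eq_neg_iff_add_eq_0 add.commute)

lemma cinner_minus_right: "cinner x (- y::'a::complex_inner) = - cinner x y"
  using cinner_add_right[of x y "- y"] by (simp add: eq_neg_iff_add_eq_0 add.commute)

lemma cinner_diff_left: "cinner (x - y) (z::'a::complex_inner) = cinner x z - cinner y z"
  by (simp only: diff_conv_add_uminus cinner_add_left cinner_minus_left)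

lemma cinner_diff_right: "cinner z (x - y::'a::complex_inner) = cinner z x - cinner z y"
  by (simp only: diff_conv_add_uminus cinner_add_right cinner_minus_right)

lemma cinner_scaleR_left: "cinner (r *\<^sub>R x) (y::'a::complex_inner) = of_real r * cinner x y"
  by (simp add: scaleR_scaleC cinner_scaleC_left)

lemma cinner_scaleR_right: "cinner y (r *\<^sub>R x) = of_real r * cinner y (x::'a::complex_inner)"
  by (simp add: scaleR_scaleC cinner_scaleC_right)

lemma cinner_self: "cinner x (x::'a::complex_inner) = complex_of_real ((norm x)\<^sup>2)"
  using cinner_real[of x] cinner_ge_zero[of x] norm_eq_sqrt_cinner[of x]
  by (simp add: complex_eq_iff)

lemma Re_cinner_self: "Re (cinner x (x::'a::complex_inner)) = (norm x)\<^sup>2"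
  by (simp add: cinner_self)

lemma cnj_mult_self: "cnj a * a = complex_of_real ((cmod a)\<^sup>2)"
  using complex_norm_square[of a] by (simp add: mult.commute del: of_real_power)

lemma norm_scaleC [simp]: "norm (a *\<^sub>C (x::'a::complex_inner)) = cmod a * norm x"
proof -
  have "cinner (a *\<^sub>C x) (a *\<^sub>C x) = cnj a * a * cinner x x"
    by (simp add: cinner_scaleC_left cinner_scaleC_right)
  also have "\<dots> = complex_of_real ((cmod a * norm x)\<^sup>2)"
    by (simp add: cnj_mult_self cinner_self power_mult_distrib)
  finally have "(norm (a *\<^sub>C x))\<^sup>2 = (cmod a * norm x)\<^sup>2"
    by (metis cinner_self of_real_eq_iff)
  then show ?thesis
    by (metis norm_ge_zero power2_eq_imp_eq mult_nonneg_nonneg)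
qed

lemma cinner_eq_zero_all: "(\<And>y. cinner y x = 0) \<Longrightarrow> x = (0::'a::complex_inner)"
  using cinner_eq_zero_iff by blast

lemma norm_diff_scaleC_square:
  "(norm (w - a *\<^sub>C k))\<^sup>2
     = (norm w)\<^sup>2 - 2 * Re (cnj a * cinner k w) + (cmod a)\<^sup>2 * (norm (k::'a::complex_inner))\<^sup>2"
proof -
  have "cinner (w - a *\<^sub>C k) (w - a *\<^sub>C k)
      = cinner w w - (cnj a * cinner k w + cnj (cnj a * cinner k w)) + cnj a * a * cinner k k"
    by (simp add: cinner_diff_left cinner_diff_right cinner_scaleC_left cinner_scaleC_right
        cinner_commute[of w k] algebra_simps)
  then have "Re (cinner (w - a *\<^sub>C k) (w - a *\<^sub>C k))
      = Re (cinner w w) - 2 * Re (cnj a * cinner k w) + Re (cnj a * a * cinner k k)"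
    by simp
  moreover have "Re (cnj a * a * cinner k k) = (cmod a)\<^sup>2 * (norm k)\<^sup>2"
    by (simp only: cnj_mult_self cinner_self of_real_mult[symmetric] Re_complex_of_real)
  ultimately show ?thesis
    by (simp add: Re_cinner_self)
qed

lemma Cauchy_Schwarz: "cmod (cinner x y) \<le> norm x * norm (y::'a::complex_inner)"
proof (cases "x = 0")
  case False
  define t where "t = cinner x y / complex_of_real ((norm x)\<^sup>2)"
  have nx: "norm x > 0" using False by simp
  have "0 \<le> Re (cinner (y - t *\<^sub>C x) (y - t *\<^sub>C x))" by (rule cinner_ge_zero)
  also have "cinner (y - t *\<^sub>C x) (y - t *\<^sub>C x) =
      cinner y y - t * cinner y x - cnj t * cinner x y + cnj t * t * cinner x x"
    by (simp add: cinner_diff_left cinner_diff_right cinner_scaleC_left cinner_scaleC_right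
        algebra_simps)
  also have "cinner y x = cnj (cinner x y)" by (rule cinner_commute)
  also have "cnj t * t * cinner x x = cnj t * cinner x y"
    using nx by (simp add: t_def cinner_self field_simps power2_eq_square)
  finally have "0 \<le> Re (cinner y y - t * cnj (cinner x y))" by simp
  also have "t * cnj (cinner x y) = complex_of_real ((cmod (cinner x y))\<^sup>2 / (norm x)\<^sup>2)"
    using cnj_mult_self[of "cinner x y"] by (simp add: t_def mult.commute del: of_real_power)
  finally have "(cmod (cinner x y))\<^sup>2 / (norm x)\<^sup>2 \<le> (norm y)\<^sup>2"
    by (simp add: Re_cinner_self)
  then have "(cmod (cinner x y))\<^sup>2 \<le> (norm x * norm y)\<^sup>2"
    using nx by (simp add: field_simps)
  then show ?thesis
    by (meson norm_ge_zero mult_nonneg_nonneg power2_le_imp_le)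
qed simp

lemma Re_cinner_le: "Re (cinner x y) \<le> norm x * norm (y::'a::complex_inner)"
  using complex_Re_le_cmod Cauchy_Schwarz order_trans by blast

lemma bounded_bilinear_cinner: "bounded_bilinear (cinner :: 'a::complex_inner \<Rightarrow> 'a \<Rightarrow> complex)"
proof
  fix a a' b b' :: 'a and r :: real
  show "cinner (a + a') b = cinner a b + cinner a' b" by (rule cinner_add_left)
  show "cinner a (b + b') = cinner a b + cinner a b'" by (rule cinner_add_right)
  show "cinner (r *\<^sub>R a) b = r *\<^sub>R cinner a b" by (simp add: cinner_scaleR_left scaleR_conv_of_real)
  show "cinner a (r *\<^sub>R b) = r *\<^sub>R cinner a b" by (simp add: cinner_scaleR_right scaleR_conv_of_real)
  show "\<exists>K. \<forall>a b. norm (cinner a b) \<le> norm a * norm b * K"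
    by (rule exI[of _ 1]) (simp add: Cauchy_Schwarz)
qed

text \<open>Unlike its real counterpart (think of a rotation), this needs the test vector
  \<open>Q y + \<i> *\<^sub>C y\<close>.\<close>

lemma polarization_zero:
  fixes Q :: "'a::complex_inner \<Rightarrow> 'a"
  assumes add: "\<And>x y. Q (x + y) = Q x + Q y" and sc: "\<And>c x. Q (c *\<^sub>C x) = c *\<^sub>C Q x"
    and z: "\<And>z. cinner z (Q z) = 0"
  shows "Q y = 0"
proof -
  let ?x = "Q y"
  have 1: "cinner ?x (Q y) + cinner y (Q ?x) = 0"
    using z[of "?x + y"] z[of ?x] z[of y]
    by (simp add: add cinner_add_left cinner_add_right) (metis add.commute)
  have "\<i> * (cinner ?x (Q y) - cinner y (Q ?x)) = 0"
    using z[of "?x + \<i> *\<^sub>C y"] z[of ?x] z[of y]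
    by (simp add: add sc cinner_add_left cinner_add_right cinner_scaleC_left cinner_scaleC_right
        right_diff_distrib)
  with 1 have "cinner ?x ?x = 0" by (simp add: algebra_simps)
  then show ?thesis using cinner_eq_zero_iff by blast
qed

lemma bounded_clinearI:
  assumes "\<And>x y. f (x + y) = f x + f y" "\<And>c x. f (c *\<^sub>C x) = c *\<^sub>C f x"
    and "\<And>x. norm (f x) \<le> norm x * K"
  shows "bounded_clinear f"
  unfolding bounded_clinear_def clinear_def using assms by blast

lemma bounded_clinear_bounded_linear: "bounded_clinear f \<Longrightarrow> bounded_linear f"
  unfolding bounded_clinear_def clinear_def
  by (auto intro!: bounded_linear_intro simp: scaleR_scaleC)

lemma bounded_clinear_linear: "bounded_clinear f \<Longrightarrow> linear f"
  by (simp add: bounded_clinear_bounded_linear bounded_linear.linear)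

lemma bounded_clinear_scaleC: "bounded_clinear f \<Longrightarrow> f (c *\<^sub>C x) = c *\<^sub>C f x"
  unfolding bounded_clinear_def clinear_def by blast

lemma bounded_clinear_pos_bound: "bounded_clinear f \<Longrightarrow> \<exists>K>0. \<forall>x. norm (f x) \<le> norm x * K"
  using bounded_clinear_bounded_linear bounded_linear.pos_bounded by blast

lemma bounded_clinear_ident: "bounded_clinear (\<lambda>x::'a::complex_inner. x)"
  by (rule bounded_clinearI[where K=1]) auto

lemma bounded_clinear_scaleC_right: "bounded_clinear (\<lambda>x::'a::complex_inner. c *\<^sub>C x)"
  by (rule bounded_clinearI[where K="cmod c"])
    (auto simp: scaleC_add_right scaleC_scaleC mult.commute)

lemma bounded_clinear_compose:
  assumes f: "bounded_clinear f" and g: "bounded_clinear g"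
  shows "bounded_clinear (\<lambda>x. f (g x))"
proof -
  obtain K1 where K1: "K1 > 0" "\<forall>x. norm (f x) \<le> norm x * K1"
    using bounded_clinear_pos_bound[OF f] by blast
  obtain K2 where K2: "\<forall>x. norm (g x) \<le> norm x * K2"
    using bounded_clinear_pos_bound[OF g] by blast
  show ?thesis
  proof (rule bounded_clinearI[where K="K2 * K1"])
    fix x
    have "norm (f (g x)) \<le> norm (g x) * K1" using K1 by blast
    also have "\<dots> \<le> norm x * K2 * K1" using K2 K1(1) by (simp add: mult_right_mono)
    finally show "norm (f (g x)) \<le> norm x * (K2 * K1)" by (simp add: mult.assoc)
  qed (simp_all add: linear_add[OF bounded_clinear_linear] bounded_clinear_scaleC f g)
qed

lemma bounded_clinear_add:
  assumes f: "bounded_clinear f" and g: "bounded_clinear g"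
  shows "bounded_clinear (\<lambda>x. f x + g x)"
proof -
  obtain K1 where K1: "\<forall>x. norm (f x) \<le> norm x * K1"
    using bounded_clinear_pos_bound[OF f] by blast
  obtain K2 where K2: "\<forall>x. norm (g x) \<le> norm x * K2"
    using bounded_clinear_pos_bound[OF g] by blast
  show ?thesis
  proof (rule bounded_clinearI[where K="K1 + K2"])
    fix x
    show "norm (f x + g x) \<le> norm x * (K1 + K2)"
      using norm_triangle_ineq[of "f x" "g x"] K1 K2 by (smt (verit) distrib_left)
  qed (simp_all add: linear_add[OF bounded_clinear_linear] bounded_clinear_scaleC f g
      scaleC_add_right)
qed

lemma bounded_clinear_diff:
  assumes f: "bounded_clinear f" and g: "bounded_clinear g"
  shows "bounded_clinear (\<lambda>x. f x - g x)"
  using bounded_clinear_add[OF f bounded_clinear_compose[OF bounded_clinear_scaleC_right g, of "- 1"]]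
  by (simp add: scaleC_minus_left scaleC_one)

lemma bounded_clinear_funpow:
  fixes f :: "'a::complex_inner \<Rightarrow> 'a"
  assumes "bounded_clinear f"
  shows "bounded_clinear (f ^^ n)"
  by (induction n) (simp_all add: id_def bounded_clinear_ident bounded_clinear_compose[OF assms])

lemma funpow_commute: "(\<And>x. B (N x) = N (B x)) \<Longrightarrow> B ((N ^^ n) x) = (N ^^ n) (B x)"
  by (induction n) auto

lemma is_adjointD: "is_adjoint A B \<Longrightarrow> cinner (A x) y = cinner x (B y)"
  unfolding is_adjoint_def by blast

lemma is_adjoint_sym: "is_adjoint A B \<Longrightarrow> is_adjoint B (A::'a::complex_inner \<Rightarrow> 'a)"
  unfolding is_adjoint_def by (metis cinner_commute)

lemma is_adjoint_unique:
  assumes "is_adjoint A B" "is_adjoint A (C::'a::complex_inner \<Rightarrow> 'a)"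
  shows "B = C"
proof
  fix y
  have "cinner x (B y - C y) = 0" for x
    using assms by (simp add: is_adjointD[symmetric] cinner_diff_right)
  then show "B y = C y" using cinner_eq_zero_all by fastforce
qed

lemma adjoint_eqI: "is_adjoint A B \<Longrightarrow> adjoint A = (B::'a::complex_inner \<Rightarrow> 'a)"
  unfolding adjoint_def by (metis (mono_tags) is_adjoint_unique someI_ex)

lemma is_adjoint_funpow: "is_adjoint N N' \<Longrightarrow> is_adjoint (N ^^ n) (N' ^^ n)"
  unfolding is_adjoint_def by (induction n) (simp_all add: funpow_swap1)

lemma is_adjoint_bounded_clinear:
  assumes A: "bounded_clinear A" and B: "is_adjoint A (B::'a::complex_inner \<Rightarrow> 'a)"
  shows "bounded_clinear B"
proof -
  obtain K where K: "K > 0" "\<forall>x. norm (A x) \<le> norm x * K"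
    using bounded_clinear_pos_bound[OF A] by blast
  show ?thesis
  proof (rule bounded_clinearI[where K=K])
    fix y
    have "(norm (B y))\<^sup>2 = cmod (cinner (A (B y)) y)"
      by (simp add: is_adjointD[OF B] cinner_self del: of_real_power)
    also have "\<dots> \<le> norm (A (B y)) * norm y" by (rule Cauchy_Schwarz)
    also have "\<dots> \<le> norm (B y) * K * norm y"
      using K by (simp add: mult_right_mono)
    finally show "norm (B y) \<le> norm y * K"
      using K(1) by (cases "B y = 0") (auto simp: power2_eq_square mult_ac)
  next
    fix x y :: 'a and c :: complex
    have "cinner z (B (x + y) - (B x + B y)) = 0" "cinner z (B (c *\<^sub>C x) - c *\<^sub>C B x) = 0" for z
      by (simp_all add: is_adjointD[OF B, symmetric] cinner_diff_right cinner_add_right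
          cinner_scaleC_right)
    then show "B (x + y) = B x + B y" "B (c *\<^sub>C x) = c *\<^sub>C B x"
      using cinner_eq_zero_all by (metis eq_iff_diff_eq_0)+
  qed
qed

definition csubspace :: "'a::complex_vector set \<Rightarrow> bool" where
  "csubspace K \<longleftrightarrow> 0 \<in> K \<and> (\<forall>x\<in>K. \<forall>y\<in>K. x + y \<in> K) \<and> (\<forall>c. \<forall>x\<in>K. c *\<^sub>C x \<in> K)"

lemma csubspace_diff: "csubspace K \<Longrightarrow> x \<in> K \<Longrightarrow> y \<in> K \<Longrightarrow> x - y \<in> K"
  unfolding csubspace_def by (metis diff_conv_add_uminus scaleC_minus_left scaleC_one)

lemma csubspace_scaleR: "csubspace K \<Longrightarrow> x \<in> K \<Longrightarrow> r *\<^sub>R x \<in> K"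
  unfolding csubspace_def by (simp add: scaleR_scaleC)

lemma parallelogram_law:
  "(norm (u + v))\<^sup>2 + (norm (u - v))\<^sup>2 = 2 * (norm u)\<^sup>2 + 2 * (norm (v::'a::complex_inner))\<^sup>2"
proof -
  have "cinner (u + v) (u + v) + cinner (u - v) (u - v) = 2 * cinner u u + 2 * cinner v v"
    by (simp add: cinner_add_left cinner_add_right cinner_diff_left cinner_diff_right)
  from arg_cong[OF this, of Re] show ?thesis by (simp add: Re_cinner_self)
qed

lemma norm_diff_square_midpoint:
  fixes x u v :: "'a::complex_inner"
  shows "(norm (u - v))\<^sup>2
    = 2 * (norm (x - u))\<^sup>2 + 2 * (norm (x - v))\<^sup>2 - 4 * (norm (x - (1/2) *\<^sub>R (u + v)))\<^sup>2"
proof -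
  have "(x - u) + (x - v) = 2 *\<^sub>R (x - (1/2) *\<^sub>R (u + v))"
    by (simp add: algebra_simps scaleR_2)
  moreover have "(x - u) - (x - v) = v - u" by simp
  ultimately show ?thesis
    using parallelogram_law[of "x - u" "x - v"]
    by (simp add: norm_minus_commute[of v u] power_mult_distrib)
qed

lemma csubspace_minimizing_seq_Cauchy:
  fixes x :: "'a::complex_inner"
  assumes sub: "csubspace K" and kk: "\<And>n. kk n \<in> K"
    and D_le: "\<And>k. k \<in> K \<Longrightarrow> D \<le> (norm (x - k))\<^sup>2"
    and kk_le: "\<And>n. (norm (x - kk n))\<^sup>2 < D + inverse (real (Suc n))"
  shows "Cauchy kk"
proof (rule metric_CauchyI)
  have sq: "(norm (kk m - kk n))\<^sup>2 < 2 * inverse (real (Suc m)) + 2 * inverse (real (Suc n))"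
    for m n
  proof -
    have "(1/2) *\<^sub>R (kk m + kk n) \<in> K"
      using sub kk by (simp add: csubspace_scaleR csubspace_def)
    then show ?thesis
      using D_le norm_diff_square_midpoint[of "kk m" "kk n" x] kk_le[of m] kk_le[of n]
      by fastforce
  qed
  fix e :: real assume "e > 0"
  then obtain M where M: "inverse (real (Suc M)) < e\<^sup>2 / 4"
    using reals_Archimedean[of "e\<^sup>2 / 4"] by auto
  have "dist (kk m) (kk n) < e" if "m \<ge> M" "n \<ge> M" for m n
  proof -
    have "inverse (real (Suc m)) \<le> inverse (real (Suc M))"
      "inverse (real (Suc n)) \<le> inverse (real (Suc M))"
      using that by (simp_all add: le_imp_inverse_le)
    then have "(norm (kk m - kk n))\<^sup>2 < e\<^sup>2" using sq[of m n] M by linarith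
    then show ?thesis using \<open>e > 0\<close> by (simp add: dist_norm power_less_imp_less_base)
  qed
  then show "\<exists>M. \<forall>m\<ge>M. \<forall>n\<ge>M. dist (kk m) (kk n) < e" by blast
qed

lemma csubspace_nearest_point:
  fixes x :: "'a::chilbert_space"
  assumes closed: "closed K" and sub: "csubspace K"
  shows "\<exists>p\<in>K. \<forall>k\<in>K. norm (x - p) \<le> norm (x - k)"
proof -
  define f where "f k = (norm (x - k))\<^sup>2" for k
  define D where "D = Inf (f ` K)"
  have "K \<noteq> {}" using sub by (auto simp: csubspace_def)
  have D_le: "D \<le> f k" if "k \<in> K" for k
    unfolding D_def using that by (intro cINF_lower bdd_belowI[of _ 0]) (auto simp: f_def)
  have "\<forall>n. \<exists>k\<in>K. f k < D + inverse (real (Suc n))"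
    using cInf_lessD[of "f ` K"] \<open>K \<noteq> {}\<close> by (simp add: D_def)
  then obtain kk where kk: "\<And>n. kk n \<in> K" "\<And>n. f (kk n) < D + inverse (real (Suc n))"
    by metis
  then have "Cauchy kk"
    by (intro csubspace_minimizing_seq_Cauchy[OF sub, of kk D x]) (use D_le in \<open>simp_all add: f_def\<close>)
  then obtain p where p: "kk \<longlonglongrightarrow> p" using Cauchy_convergent_iff convergent_def by blast
  have "p \<in> K" using closed_sequentially[OF closed] kk(1) p by blast
  have "(\<lambda>n. f (kk n)) \<longlonglongrightarrow> f p" unfolding f_def by (intro tendsto_intros p)
  moreover have "(\<lambda>n. D + inverse (real (Suc n))) \<longlonglongrightarrow> D"
    by (rule LIMSEQ_inverse_real_of_nat_add)
  ultimately have "f p \<le> D"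
    using kk(2) by (intro LIMSEQ_le[where X="\<lambda>n. f (kk n)"]) (auto intro: less_imp_le)
  then have "f p \<le> f k" if "k \<in> K" for k using D_le[OF that] by linarith
  then show ?thesis using \<open>p \<in> K\<close> by (auto simp: f_def)
qed

lemma nearest_point_orthogonal:
  fixes x :: "'a::complex_inner"
  assumes sub: "csubspace K" and p: "p \<in> K" and near: "\<And>k. k \<in> K \<Longrightarrow> norm (x - p) \<le> norm (x - k)"
    and k: "k \<in> K"
  shows "cinner k (x - p) = 0"
proof -
  define c where "c = cinner k (x - p)"
  define s where "s = 1 / ((norm k)\<^sup>2 + 1)"
  have s0: "s > 0" and sk: "s * (norm k)\<^sup>2 < 1"
    by (simp_all add: s_def add_nonneg_pos divide_less_eq)
  have "p + (s * c) *\<^sub>C k \<in> K" using sub p k unfolding csubspace_def by blast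
  then have "(norm (x - p))\<^sup>2 \<le> (norm ((x - p) - (s * c) *\<^sub>C k))\<^sup>2"
    using near by (simp add: algebra_simps power_mono)
  also have "\<dots> = (norm (x - p))\<^sup>2 - 2 * (s * (cmod c)\<^sup>2) + (s * cmod c)\<^sup>2 * (norm k)\<^sup>2"
    using s0 by (simp add: norm_diff_scaleC_square mult.assoc cnj_mult_self norm_mult flip: c_def)
  finally have "s * (2 * (cmod c)\<^sup>2) \<le> s * ((cmod c)\<^sup>2 * (s * (norm k)\<^sup>2))"
    by (simp add: power2_eq_square mult_ac)
  then have "2 * (cmod c)\<^sup>2 \<le> (cmod c)\<^sup>2 * (s * (norm k)\<^sup>2)" using s0 by simp
  also have "\<dots> \<le> (cmod c)\<^sup>2" using sk by (simp add: mult_left_le)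
  finally show ?thesis by (simp add: c_def)
qed

lemma csubspace_projection_exists:
  fixes x :: "'a::chilbert_space"
  assumes "closed K" "csubspace K"
  shows "\<exists>p\<in>K. \<forall>k\<in>K. cinner k (x - p) = 0"
  using csubspace_nearest_point[OF assms, of x] nearest_point_orthogonal[OF assms(2)] by metis

lemma riesz_representation:
  fixes f :: "'a::chilbert_space \<Rightarrow> complex"
  assumes add: "\<And>x y. f (x + y) = f x + f y" and scale: "\<And>c x. f (c *\<^sub>C x) = c * f x"
    and bound: "\<And>x. norm (f x) \<le> norm x * K"
  shows "\<exists>z. \<forall>x. f x = cinner z x"
proof (cases "\<forall>x. f x = 0")
  case True then show ?thesis by (intro exI[of _ 0]) simp
next
  case False
  then obtain y where y: "f y \<noteq> 0" by blast
  define Ker where "Ker = {x. f x = 0}"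
  have "bounded_linear f"
  proof (rule bounded_linear_intro[where K=K])
    show "f (r *\<^sub>R x) = r *\<^sub>R f x" for r x
      using scale[of "complex_of_real r" x] by (simp add: scaleR_scaleC scaleR_conv_of_real)
  qed (use add bound in auto)
  then have f_diff: "f (a - b) = f a - f b" for a b
    by (simp add: linear_diff bounded_linear.linear)
  have "closed Ker" unfolding Ker_def
    by (intro closed_Collect_eq continuous_on_const linear_continuous_on \<open>bounded_linear f\<close>)
  moreover have "csubspace Ker"
    unfolding Ker_def csubspace_def using add scale f_diff[of 0 0] by simp
  ultimately obtain p where p: "p \<in> Ker" "\<And>k. k \<in> Ker \<Longrightarrow> cinner k (y - p) = 0"
    using csubspace_projection_exists by blast
  define w where "w = y - p"
  have fw: "f w = f y" using p(1) by (simp add: w_def Ker_def f_diff)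
  then have "w \<noteq> 0" using y f_diff[of 0 0] by auto
  show ?thesis
  proof (intro exI allI)
    fix x
    have "f (f x *\<^sub>C w - f w *\<^sub>C x) = 0" by (simp add: f_diff scale)
    then have "cinner (f x *\<^sub>C w - f w *\<^sub>C x) w = 0" using p(2) by (simp add: Ker_def w_def)
    then have "cnj (f x) * cinner w w - cnj (f w) * cinner x w = 0"
      by (simp add: cinner_diff_left cinner_scaleC_left)
    then have "f x * cinner w w = f w * cinner w x"
      by (metis (no_types, lifting) cinner_commute complex_cnj_cnj complex_cnj_diff
          complex_cnj_mult complex_cnj_zero eq_iff_diff_eq_0)
    then show "f x = cinner ((cnj (f w) / complex_of_real ((norm w)\<^sup>2)) *\<^sub>C w) x"
      using \<open>w \<noteq> 0\<close> by (simp add: cinner_scaleC_left cinner_self field_simps)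
  qed
qed

lemma adjoint_exists:
  fixes A :: "'a::chilbert_space \<Rightarrow> 'a"
  assumes A: "bounded_clinear A"
  shows "is_adjoint A (adjoint A)"
proof -
  obtain K where K: "K > 0" "\<forall>x. norm (A x) \<le> norm x * K"
    using bounded_clinear_pos_bound[OF A] by blast
  have "\<exists>z. \<forall>x. cinner y (A x) = cinner z x" for y
  proof (rule riesz_representation[where K="norm y * K"])
    show "norm (cinner y (A x)) \<le> norm x * (norm y * K)" for x
      using Cauchy_Schwarz[of y "A x"] K mult_left_mono[of "norm (A x)" "norm x * K" "norm y"]
      by (simp add: mult_ac)
  qed (simp_all add: linear_add[OF bounded_clinear_linear[OF A]] bounded_clinear_scaleC[OF A]
      cinner_add_right cinner_scaleC_right)
  then obtain B where "\<And>y x. cinner y (A x) = cinner (B y) x" by metis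
  then have "is_adjoint A B" unfolding is_adjoint_def by (metis cinner_commute)
  then show ?thesis using adjoint_eqI by blast
qed

section \<open>Reducing subspaces of an irreducible operator\<close>

definition proj_onto :: "'a::chilbert_space set \<Rightarrow> 'a \<Rightarrow> 'a" where
  "proj_onto K x = (SOME p. p \<in> K \<and> (\<forall>k\<in>K. cinner k (x - p) = 0))"

context
  fixes K :: "'a::chilbert_space set"
  assumes closed: "closed K" and sub: "csubspace K"
begin

lemma proj_onto_in: "proj_onto K x \<in> K"
  and proj_onto_orthogonal: "k \<in> K \<Longrightarrow> cinner k (x - proj_onto K x) = 0"
proof -
  have "\<exists>p. p \<in> K \<and> (\<forall>k\<in>K. cinner k (x - p) = 0)"
    using csubspace_projection_exists[OF closed sub] by blast
  from someI_ex[OF this] show "proj_onto K x \<in> K" "k \<in> K \<Longrightarrow> cinner k (x - proj_onto K x) = 0"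
    unfolding proj_onto_def by blast+
qed

lemma proj_onto_unique:
  assumes p: "p \<in> K" "\<And>k. k \<in> K \<Longrightarrow> cinner k (x - p) = 0"
  shows "proj_onto K x = p"
proof -
  let ?q = "proj_onto K x"
  have d: "p - ?q \<in> K" using csubspace_diff[OF sub p(1) proj_onto_in] .
  have "cinner (p - ?q) (p - ?q) = cinner (p - ?q) (x - ?q) - cinner (p - ?q) (x - p)"
    by (simp add: cinner_diff_right)
  also have "\<dots> = 0" using p(2)[OF d] proj_onto_orthogonal[OF d] by simp
  finally have "p - ?q = 0" using cinner_eq_zero_iff by blast
  then show ?thesis by simp
qed

lemma proj_onto_id: "k \<in> K \<Longrightarrow> proj_onto K k = k"
  by (rule proj_onto_unique) simp_all

lemma cinner_proj_onto: "cinner (proj_onto K x) y = cinner (proj_onto K x) (proj_onto K y)"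
  using proj_onto_orthogonal[OF proj_onto_in, of x y] by (simp add: cinner_diff_right)

lemma orth_proj_proj_onto: "orth_proj (proj_onto K)"
proof -
  let ?P = "proj_onto K"
  have "?P (x + y) = ?P x + ?P y" for x y
  proof (rule proj_onto_unique)
    show "?P x + ?P y \<in> K" using sub proj_onto_in by (simp add: csubspace_def)
    fix k assume "k \<in> K"
    then show "cinner k (x + y - (?P x + ?P y)) = 0"
      using proj_onto_orthogonal[of k x] proj_onto_orthogonal[of k y]
      by (simp add: cinner_diff_right cinner_add_right)
  qed
  moreover have "?P (c *\<^sub>C x) = c *\<^sub>C ?P x" for c x
  proof (rule proj_onto_unique)
    show "c *\<^sub>C ?P x \<in> K" using sub proj_onto_in by (simp add: csubspace_def)
    fix k assume "k \<in> K"
    then show "cinner k (c *\<^sub>C x - c *\<^sub>C ?P x) = 0"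
      using proj_onto_orthogonal[of k x]
      by (simp add: cinner_scaleC_right flip: scaleC_diff_right)
  qed
  moreover have "norm (?P x) \<le> norm x * 1" for x
  proof -
    have "(norm (?P x))\<^sup>2 = cmod (cinner (?P x) x)"
      by (simp add: cinner_proj_onto[of x x] cinner_self del: of_real_power)
    also have "\<dots> \<le> norm (?P x) * norm x" by (rule Cauchy_Schwarz)
    finally show ?thesis by (cases "?P x = 0") (auto simp: power2_eq_square)
  qed
  ultimately have "bounded_clinear ?P" by (rule bounded_clinearI)
  moreover have "is_adjoint ?P ?P"
    unfolding is_adjoint_def by (metis cinner_proj_onto cinner_commute)
  moreover have "?P \<circ> ?P = ?P"
    using proj_onto_in proj_onto_id by (simp add: fun_eq_iff)
  ultimately show ?thesis
    unfolding orth_proj_def using adjoint_eqI by blast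
qed

lemma proj_onto_commute:
  assumes A: "bounded_clinear A" and adj: "is_adjoint A A'"
    and inv: "\<And>x. x \<in> K \<Longrightarrow> A x \<in> K" and inv': "\<And>x. x \<in> K \<Longrightarrow> A' x \<in> K"
  shows "proj_onto K (A x) = A (proj_onto K x)"
proof (rule proj_onto_unique)
  show "A (proj_onto K x) \<in> K" using inv proj_onto_in by blast
  fix k assume "k \<in> K"
  have "cinner k (A x - A (proj_onto K x)) = cnj (cinner (A (x - proj_onto K x)) k)"
    by (simp add: linear_diff[OF bounded_clinear_linear[OF A]] cinner_commute[of k])
  also have "\<dots> = cinner (A' k) (x - proj_onto K x)"
    by (simp add: is_adjointD[OF adj] cinner_commute[of _ "A' k"])
  also have "\<dots> = 0" using proj_onto_orthogonal inv' \<open>k \<in> K\<close> by blast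
  finally show "cinner k (A x - A (proj_onto K x)) = 0" .
qed

end

lemma irreducible_reducing_subspace:
  fixes A :: "'a::chilbert_space \<Rightarrow> 'a"
  assumes irr: "irreducible_op A" and A: "bounded_clinear A" and adj: "is_adjoint A A'"
    and closed: "closed K" and sub: "csubspace K"
    and inv: "\<And>x. x \<in> K \<Longrightarrow> A x \<in> K" and inv': "\<And>x. x \<in> K \<Longrightarrow> A' x \<in> K"
  shows "K = {0} \<or> K = UNIV"
proof -
  let ?P = "proj_onto K"
  have "?P \<circ> A = A \<circ> ?P"
    using proj_onto_commute[OF closed sub A adj inv inv'] by auto
  then have "?P = (\<lambda>_. 0) \<or> ?P = id"
    using irr orth_proj_proj_onto[OF closed sub] unfolding irreducible_op_def by blast
  then show ?thesis
  proof
    assume "?P = (\<lambda>_. 0)"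
    then have "k = 0" if "k \<in> K" for k using proj_onto_id[OF closed sub that] by simp
    then show ?thesis using sub by (auto simp: csubspace_def)
  next
    assume "?P = id"
    then have "x \<in> K" for x using proj_onto_in[OF closed sub, of x] by simp
    then show ?thesis by blast
  qed
qed

section \<open>Spectral subspaces of normal operators for discs\<close>

lemma log_convex_seq_growth:
  fixes g :: "nat \<Rightarrow> real"
  assumes nonneg: "\<And>n. g n \<ge> 0" and log_convex: "\<And>n. (g (Suc n))\<^sup>2 \<le> g n * g (Suc (Suc n))"
    and pos: "g k > 0" "r > 0" and ratio: "r * g k \<le> g (Suc k)"
  shows "r ^ m * g k \<le> g (k + m)"
proof -
  have step: "0 < g (k + m) \<and> r * g (k + m) \<le> g (Suc (k + m))" for m
  proof (induction m)
    case (Suc m)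
    then have pos': "0 < g (Suc (k + m))" using pos(2) by (smt (verit) mult_pos_pos)
    have "g (k + m) * (r * g (Suc (k + m))) = (r * g (k + m)) * g (Suc (k + m))" by simp
    also have "\<dots> \<le> g (Suc (k + m)) * g (Suc (k + m))"
      using Suc nonneg by (simp add: mult_right_mono)
    also have "\<dots> \<le> g (k + m) * g (Suc (Suc (k + m)))"
      using log_convex by (simp add: power2_eq_square)
    finally show ?case using Suc pos' by (simp add: mult_le_cancel_left_pos)
  qed (use pos ratio in simp)
  show ?thesis
  proof (induction m)
    case (Suc m)
    have "r ^ Suc m * g k \<le> r * g (k + m)" using Suc pos(2) by (simp add: mult.assoc)
    also have "\<dots> \<le> g (k + Suc m)" using step[of m] by simp
    finally show ?case .
  qed simp
qed

text \<open>Once a ratio \<open>g (Suc k) / g k\<close> exceeds \<open>c\<close>, all later ratios do, which contradicts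
  the growth bound.\<close>

lemma log_convex_seq_le_geometric:
  fixes g :: "nat \<Rightarrow> real"
  assumes nonneg: "\<And>n. g n \<ge> 0" and log_convex: "\<And>n. (g (Suc n))\<^sup>2 \<le> g n * g (Suc (Suc n))"
    and bound: "\<And>n. g n \<le> C * c ^ n" and "c \<ge> 0"
  shows "g n \<le> c ^ n * g 0"
proof (rule ccontr)
  assume "\<not> g n \<le> c ^ n * g 0"
  moreover have "g n \<le> c ^ n * g 0" if "\<And>k. g (Suc k) \<le> c * g k"
  proof (induction n)
    case (Suc n)
    then show ?case
      using that[of n] mult_left_mono[OF Suc \<open>c \<ge> 0\<close>] by (simp add: mult.assoc)
  qed simp
  ultimately obtain k where k: "g (Suc k) > c * g k" by (meson not_le)
  have "g k > 0"
  proof (rule ccontr)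
    assume "\<not> g k > 0"
    then have "g k = 0" using nonneg[of k] by simp
    then have "g (Suc k) = 0" using log_convex[of k] by simp
    with k \<open>g k = 0\<close> show False by simp
  qed
  then have "c > 0"
    using k bound[of "Suc k"] \<open>c \<ge> 0\<close> by (cases "c = 0") auto
  define r where "r = g (Suc k) / g k"
  have "r > c" using k \<open>g k > 0\<close> by (simp add: r_def pos_less_divide_eq mult.commute)
  then obtain m where m: "C * c ^ k / g k < (r / c) ^ m"
    using real_arch_pow[of "r / c"] \<open>c > 0\<close> by auto
  have "r ^ m * g k \<le> C * c ^ (k + m)"
    using log_convex_seq_growth[OF nonneg log_convex \<open>g k > 0\<close>, of r m] bound[of "k + m"]
      \<open>r > c\<close> \<open>c > 0\<close> \<open>g k > 0\<close>
    by (simp add: r_def)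
  then have "(r / c) ^ m \<le> C * c ^ k / g k"
    using \<open>c > 0\<close> \<open>g k > 0\<close> by (simp add: power_divide power_add field_simps)
  with m show False by simp
qed

lemma normal_norm_adjoint:
  fixes N :: "'a::complex_inner \<Rightarrow> 'a"
  assumes adj: "is_adjoint N N'" and comm: "\<And>x. N (N' x) = N' (N x)"
  shows "norm (N' v) = norm (N v)"
proof -
  have "cinner (N v) (N v) = cinner v (N (N' v))" using is_adjointD[OF adj] comm by simp
  also have "\<dots> = cnj (cinner (N' v) (N' v))"
    using is_adjointD[OF adj] cinner_commute by metis
  finally have "Re (cinner (N v) (N v)) = Re (cinner (N' v) (N' v))" by simp
  then show ?thesis by (simp add: Re_cinner_self power2_eq_iff_nonneg)
qed

text \<open>\<open>disc_space N c\<close> is the spectral subspace of a normal operator \<open>N\<close> for the disc of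
  radius \<open>c\<close>, described without spectral theory.\<close>

definition disc_space :: "('a::complex_inner \<Rightarrow> 'a) \<Rightarrow> real \<Rightarrow> 'a set" where
  "disc_space N c = {x. \<forall>n. norm ((N ^^ n) x) \<le> c ^ n * norm x}"

locale normal_pair =
  fixes N N' :: "'a::chilbert_space \<Rightarrow> 'a"
  assumes bounded: "bounded_clinear N"
    and adj: "is_adjoint N N'"
    and comm: "\<And>x. N (N' x) = N' (N x)"
begin

lemma bounded_adjoint: "bounded_clinear N'"
  using is_adjoint_bounded_clinear[OF bounded adj] .

lemma swap: "normal_pair N' N"
  using bounded_adjoint is_adjoint_sym[OF adj] comm by unfold_locales auto

lemma norm_funpow_adjoint: "norm ((N' ^^ n) v) = norm ((N ^^ n) v)"
proof (rule normal_norm_adjoint[OF is_adjoint_funpow[OF adj]])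
  have "N' ((N ^^ n) y) = (N ^^ n) (N' y)" for y by (rule funpow_commute) (use comm in auto)
  then show "(N ^^ n) ((N' ^^ n) x) = (N' ^^ n) ((N ^^ n) x)" for x
    by (intro funpow_commute) simp
qed

lemma disc_space_adjoint: "disc_space N' c = disc_space N c"
  unfolding disc_space_def using norm_funpow_adjoint by simp

lemma norm_square_le: "(norm (N y))\<^sup>2 \<le> norm y * norm (N (N y))"
proof -
  have "(norm (N y))\<^sup>2 = Re (cinner y (N' (N y)))"
    by (simp add: is_adjointD[OF adj, symmetric] Re_cinner_self)
  also have "\<dots> \<le> norm y * norm (N' (N y))" by (rule Re_cinner_le)
  finally show ?thesis using normal_norm_adjoint[OF adj comm] by simp
qed

lemma mem_disc_space:
  assumes "c \<ge> 0" and "\<And>n. norm ((N ^^ n) z) \<le> C * c ^ n"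
  shows "z \<in> disc_space N c"
proof -
  have "norm ((N ^^ n) z) \<le> c ^ n * norm ((N ^^ 0) z)" for n
    by (rule log_convex_seq_le_geometric[where g="\<lambda>n. norm ((N ^^ n) z)" and C=C])
      (use assms norm_square_le in simp_all)
  then show ?thesis by (simp add: disc_space_def)
qed

lemma closed_disc_space: "closed (disc_space N c)"
proof -
  have "disc_space N c = (\<Inter>n. {x. norm ((N ^^ n) x) \<le> c ^ n * norm x})"
    by (auto simp: disc_space_def)
  moreover have "closed {x. norm ((N ^^ n) x) \<le> c ^ n * norm x}" for n
    using bounded_clinear_bounded_linear[OF bounded_clinear_funpow[OF bounded]]
    by (intro closed_Collect_le continuous_intros linear_continuous_on)
  ultimately show ?thesis by auto
qed

lemma disc_space_invariant:
  assumes "c \<ge> 0" and B: "bounded_clinear B" and BN: "\<And>x. B (N x) = N (B x)"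
    and x: "x \<in> disc_space N c"
  shows "B x \<in> disc_space N c"
proof -
  obtain K where K: "K > 0" "\<forall>x. norm (B x) \<le> norm x * K"
    using bounded_clinear_pos_bound[OF B] by blast
  show ?thesis
  proof (rule mem_disc_space[OF \<open>c \<ge> 0\<close>, where C="K * norm x"])
    fix n
    have "norm ((N ^^ n) (B x)) \<le> norm ((N ^^ n) x) * K"
      using K funpow_commute[of B N n x, OF BN] by metis
    also have "\<dots> \<le> c ^ n * norm x * K" using x K by (simp add: disc_space_def mult_right_mono)
    finally show "norm ((N ^^ n) (B x)) \<le> K * norm x * c ^ n" by (simp add: mult_ac)
  qed
qed

lemma csubspace_disc_space:
  assumes "c \<ge> 0"
  shows "csubspace (disc_space N c)"
  unfolding csubspace_def
proof (intro conjI ballI allI)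
  have lin: "linear (N ^^ n)" for n by (rule bounded_clinear_linear[OF bounded_clinear_funpow[OF bounded]])
  show "0 \<in> disc_space N c" by (simp add: disc_space_def linear_0[OF lin])
  fix x assume x: "x \<in> disc_space N c"
  {
    fix y assume y: "y \<in> disc_space N c"
    show "x + y \<in> disc_space N c"
    proof (rule mem_disc_space[OF \<open>c \<ge> 0\<close>, where C="norm x + norm y"])
      fix n
      have "norm ((N ^^ n) (x + y)) \<le> norm ((N ^^ n) x) + norm ((N ^^ n) y)"
        by (simp add: linear_add[OF lin] norm_triangle_ineq)
      also have "\<dots> \<le> c ^ n * norm x + c ^ n * norm y"
        using x y by (simp add: disc_space_def add_mono)
      finally show "norm ((N ^^ n) (x + y)) \<le> (norm x + norm y) * c ^ n"
        by (simp add: algebra_simps)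
    qed
  }
  fix a
  show "a *\<^sub>C x \<in> disc_space N c"
    using x mult_left_mono[of _ _ "cmod a"]
    by (simp add: disc_space_def bounded_clinear_scaleC[OF bounded_clinear_funpow[OF bounded]]
        mult.left_commute)
qed

end

section \<open>The binomial series of \<open>sqrt (1 - t)\<close>\<close>

definition sqrt_coeff :: "nat \<Rightarrow> real" where
  "sqrt_coeff k = ((1/2) gchoose k) * (-1) ^ k"

lemma gbinomial_Suc_rec: "(a gchoose Suc k) = (a gchoose k) * (a - of_nat k) / of_nat (Suc k)"
  for a :: real
  using gbinomial_absorption[of k a] gbinomial_absorb_comp[of a k]
  by (simp add: field_simps del: of_nat_Suc)

lemma sqrt_coeff_0: "sqrt_coeff 0 = 1"
  by (simp add: sqrt_coeff_def)

lemma sqrt_coeff_nonpos: "k \<ge> 1 \<Longrightarrow> sqrt_coeff k \<le> 0"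
proof (induction k)
  case (Suc k)
  have rec: "sqrt_coeff (Suc k) = sqrt_coeff k * (of_nat k - 1/2) / of_nat (Suc k)"
    unfolding sqrt_coeff_def gbinomial_Suc_rec by (simp add: field_simps)
  show ?case
  proof (cases "k = 0")
    case False
    then show ?thesis using Suc
      by (simp add: rec divide_nonpos_pos mult_nonpos_nonneg)
  qed (simp add: sqrt_coeff_def)
qed simp

lemma sum_sqrt_coeff_nonneg: "(\<Sum>k<n. sqrt_coeff k) \<ge> 0"
proof (cases n)
  case (Suc m)
  have "(\<Sum>k<n. sqrt_coeff k) = (-1) ^ m * ((-1/2::real) gchoose m)"
    using gbinomial_sum_lower_neg[of "1/2::real" m] Suc lessThan_Suc_atMost
    by (simp add: sqrt_coeff_def)
  also have "\<dots> \<ge> 0"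
  proof (induction m)
    case (Suc m)
    then show ?case
      by (simp add: gbinomial_Suc_rec field_simps)
  qed simp
  finally show ?thesis .
qed simp

lemma sum_abs_sqrt_coeff_le: "(\<Sum>k<n. \<bar>sqrt_coeff k\<bar>) \<le> 2"
proof -
  have "(\<Sum>k<n. \<bar>sqrt_coeff k\<bar>) = (\<Sum>k<n. (if k = 0 then 2 else 0) - sqrt_coeff k)"
    using sqrt_coeff_nonpos by (intro sum.cong) (auto simp: sqrt_coeff_0)
  also have "\<dots> \<le> (\<Sum>k<n. (if k = 0 then 2 else 0))"
    using sum_sqrt_coeff_nonneg[of n] by (simp add: sum_subtractf)
  also have "\<dots> \<le> 2" by (simp add: sum.delta)
  finally show ?thesis .
qed

lemma summable_abs_sqrt_coeff: "summable (\<lambda>k. \<bar>sqrt_coeff k\<bar>)"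
  by (rule summableI_nonneg_bounded[where x=2]) (auto simp: sum_abs_sqrt_coeff_le)

lemma summable_sqrt_coeff: "summable sqrt_coeff"
  using summable_abs_sqrt_coeff by (rule summable_rabs_cancel)

lemma suminf_sqrt_coeff_nonneg: "suminf sqrt_coeff \<ge> 0"
  using summable_LIMSEQ[OF summable_sqrt_coeff] sum_sqrt_coeff_nonneg
  by (intro LIMSEQ_le_const) auto

text \<open>The square of the series is \<open>1 - t\<close>, by Vandermonde's identity for
  \<open>1/2 + 1/2 = 1\<close>.\<close>

lemma sqrt_coeff_convolution:
  "(\<Sum>i\<le>n. sqrt_coeff i * sqrt_coeff (n - i)) = (if n = 0 then 1 else if n = 1 then -1 else 0)"
proof -
  have "(\<Sum>i\<le>n. sqrt_coeff i * sqrt_coeff (n - i))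
      = (\<Sum>i=0..n. ((1/2::real) gchoose i) * ((1/2) gchoose (n - i))) * (-1) ^ n"
    unfolding atMost_atLeast0 sum_distrib_right
    by (intro sum.cong refl) (simp add: sqrt_coeff_def mult_ac flip: power_add)
  also have "(\<Sum>i=0..n. ((1/2::real) gchoose i) * ((1/2) gchoose (n - i))) = of_nat (1 choose n)"
    using gbinomial_Vandermonde[of "1/2::real" "1/2" n] binomial_gbinomial[of 1 n, where 'a=real]
    by simp
  finally show ?thesis
    by (cases n; cases "n - 1") (auto simp: binomial_eq_0)
qed

text \<open>The error between the square and the triangular partial sums is controlled by the same
  error for the real series of norms, which tends to zero by the scalar Cauchy product theorem.\<close>

lemma Cauchy_product_sums_bounded_bilinear:
  fixes a :: "nat \<Rightarrow> 'a::banach" and b :: "nat \<Rightarrow> 'b::banach"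
  assumes bl: "bounded_bilinear bl"
    and a: "summable (\<lambda>k. norm (a k))" and b: "summable (\<lambda>k. norm (b k))"
  shows "(\<lambda>k. \<Sum>i\<le>k. bl (a i) (b (k - i))) sums (bl (\<Sum>k. a k) (\<Sum>k. b k) :: 'c::real_normed_vector)"
proof -
  obtain K where K: "\<And>x y. norm (bl x y) \<le> norm x * norm y * K"
    using bounded_bilinear.bounded[OF bl] by blast
  let ?S = "\<lambda>n::nat. {..<n} \<times> {..<n}" and ?T = "\<lambda>n::nat. {(i,j). i + j < n}"
  let ?g = "\<lambda>(i,j). bl (a i) (b j)" and ?f = "\<lambda>(i,j). norm (a i) * norm (b j)"
  have T_S: "?T n \<subseteq> ?S n" for n by auto
  have fin: "finite (?S n)" for n by simp
  have square: "sum h (?S n) = (\<Sum>i<n. \<Sum>j<n. h (i, j))" for h :: "nat \<times> nat \<Rightarrow> 'd::comm_monoid_add" and n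
    by (simp add: sum.cartesian_product)
  have triangle: "sum (\<lambda>(i,j). h i j) (?T n) = (\<Sum>k<n. \<Sum>i\<le>k. h i (k - i))"
    for h :: "nat \<Rightarrow> nat \<Rightarrow> 'd::comm_monoid_add" and n
    by (rule sum.triangle_reindex)
  have "(\<lambda>n. sum ?f (?S n) - sum ?f (?T n)) \<longlonglongrightarrow>
      (\<Sum>k. norm (a k)) * (\<Sum>k. norm (b k)) - (\<Sum>k. norm (a k)) * (\<Sum>k. norm (b k))"
    using Cauchy_product_sums[of "\<lambda>k. norm (a k)" "\<lambda>k. norm (b k)"] a b
    by (intro tendsto_diff)
      (auto simp: square triangle sum_product[symmetric] sums_def
        intro!: tendsto_mult summable_LIMSEQ)
  then have lim0: "(\<lambda>n. sum ?f (?S n - ?T n) * K) \<longlonglongrightarrow> 0"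
    by (simp add: sum_diff[OF fin T_S] tendsto_mult_left_zero)
  have "norm (sum ?g (?S n) - sum ?g (?T n)) \<le> sum ?f (?S n - ?T n) * K" for n
  proof -
    have "norm (sum ?g (?S n) - sum ?g (?T n)) = norm (sum ?g (?S n - ?T n))"
      by (simp add: sum_diff[OF fin T_S])
    also have "\<dots> \<le> (\<Sum>x\<in>?S n - ?T n. ?f x * K)"
      by (rule order_trans[OF norm_sum sum_mono]) (auto simp: K)
    finally show ?thesis by (simp add: sum_distrib_right)
  qed
  then have "(\<lambda>n. sum ?g (?S n) - sum ?g (?T n)) \<longlonglongrightarrow> 0"
    by (intro Lim_null_comparison[OF always_eventually lim0]) blast
  moreover have "sum ?g (?S n) = bl (\<Sum>k<n. a k) (\<Sum>k<n. b k)" for n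
    unfolding square
    by (subst bounded_bilinear.sum_left[OF bl]) (simp add: bounded_bilinear.sum_right[OF bl])
  then have "(\<lambda>n. sum ?g (?S n)) \<longlonglongrightarrow> bl (\<Sum>k. a k) (\<Sum>k. b k)"
    using bounded_bilinear.tendsto[OF bl, OF summable_LIMSEQ summable_LIMSEQ,
        OF summable_norm_cancel[OF a] summable_norm_cancel[OF b]]
    by simp
  ultimately have "(\<lambda>n. sum ?g (?T n)) \<longlonglongrightarrow> bl (\<Sum>k. a k) (\<Sum>k. b k)"
    using tendsto_diff by fastforce
  then show ?thesis by (simp only: sums_def triangle)
qed

section \<open>The modulus of a self-adjoint contraction\<close>

text \<open>For a self-adjoint contraction \<open>Z\<close> the operator \<open>I - Z\<^sup>2\<close> is a positive contraction, so
  the binomial series of \<open>sqrt (1 - t)\<close> converges at it and yields \<open>\<bar>Z\<bar> = sqrt (Z\<^sup>2)\<close>.\<close>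

locale selfadjoint_contraction =
  fixes Z :: "'a::chilbert_space \<Rightarrow> 'a"
  assumes bounded: "bounded_clinear Z" and selfadjoint: "is_adjoint Z Z"
    and contraction: "\<And>x. norm (Z x) \<le> norm x"
begin

definition defect :: "'a \<Rightarrow> 'a" where "defect x = x - Z (Z x)"

lemma bounded_defect: "bounded_clinear defect"
  unfolding defect_def[abs_def]
  by (rule bounded_clinear_diff[OF bounded_clinear_ident bounded_clinear_compose[OF bounded bounded]])

lemma selfadjoint_defect: "is_adjoint defect defect"
  unfolding is_adjoint_def defect_def
  by (simp add: cinner_diff_left cinner_diff_right is_adjointD[OF selfadjoint])

lemma norm_defect_le: "norm (defect x) \<le> norm x"
proof -
  have "(norm (defect x))\<^sup>2 = (norm (x - 1 *\<^sub>C Z (Z x)))\<^sup>2"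
    by (simp add: defect_def scaleC_one)
  also have "\<dots> = (norm x)\<^sup>2 - 2 * (norm (Z x))\<^sup>2 + (norm (Z (Z x)))\<^sup>2"
    using is_adjointD[OF selfadjoint, of "Z x" x]
    by (simp add: norm_diff_scaleC_square Re_cinner_self)
  also have "\<dots> \<le> (norm x)\<^sup>2"
  proof -
    have "(norm (Z (Z x)))\<^sup>2 \<le> (norm (Z x))\<^sup>2" by (rule power_mono[OF contraction]) simp
    then show ?thesis using zero_le_power2[of "norm (Z x)"] by linarith
  qed
  finally show ?thesis by (rule power2_le_imp_le) simp
qed

lemma norm_defect_funpow_le: "norm ((defect ^^ k) x) \<le> norm x"
  by (induction k) (auto intro: order_trans[OF norm_defect_le])

definition sqrt_term :: "nat \<Rightarrow> 'a \<Rightarrow> 'a" where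
  "sqrt_term k x = sqrt_coeff k *\<^sub>R (defect ^^ k) x"

definition modulus :: "'a \<Rightarrow> 'a" where "modulus x = (\<Sum>k. sqrt_term k x)"

lemma norm_sqrt_term_le: "norm (sqrt_term k x) \<le> \<bar>sqrt_coeff k\<bar> * norm x"
  unfolding sqrt_term_def using norm_defect_funpow_le[of k x] by (simp add: mult_left_mono)

lemma summable_norm_sqrt_term: "summable (\<lambda>k. norm (sqrt_term k x))"
proof (rule summable_comparison_test')
  show "summable (\<lambda>k. \<bar>sqrt_coeff k\<bar> * norm x)"
    using summable_abs_sqrt_coeff by (rule summable_mult2)
qed (simp add: norm_sqrt_term_le)

lemma summable_sqrt_term: "summable (\<lambda>k. sqrt_term k x)"
  using summable_norm_sqrt_term by (rule summable_norm_cancel)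

lemma modulus_commute:
  assumes B: "bounded_clinear B" and BZ: "\<And>x. B (Z x) = Z (B x)"
  shows "B (modulus x) = modulus (B x)"
proof -
  have "B (defect x) = defect (B x)" for x
    by (simp add: defect_def linear_diff[OF bounded_clinear_linear[OF B]] BZ)
  then have "B (sqrt_term k x) = sqrt_term k (B x)" for k
    by (simp add: sqrt_term_def funpow_commute linear_scale[OF bounded_clinear_linear[OF B]])
  then show ?thesis
    unfolding modulus_def
    using bounded_linear.suminf[OF bounded_clinear_bounded_linear[OF B] summable_sqrt_term]
    by simp
qed

lemma bounded_modulus: "bounded_clinear modulus"
proof (rule bounded_clinearI[where K=2])
  fix x y :: 'a and c :: complex
  show "modulus (x + y) = modulus x + modulus y"
    using suminf_add[OF summable_sqrt_term[of x] summable_sqrt_term[of y]]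
    by (simp add: modulus_def sqrt_term_def scaleR_add_right
        linear_add[OF bounded_clinear_linear[OF bounded_clinear_funpow[OF bounded_defect]]])
  show "modulus (c *\<^sub>C x) = c *\<^sub>C modulus x"
    using modulus_commute[OF bounded_clinear_scaleC_right, of c x]
    by (simp add: bounded_clinear_scaleC[OF bounded])
  have "norm (modulus x) \<le> (\<Sum>k. norm (sqrt_term k x))"
    unfolding modulus_def by (rule summable_norm[OF summable_norm_sqrt_term])
  also have "\<dots> \<le> (\<Sum>k. \<bar>sqrt_coeff k\<bar> * norm x)"
    by (intro suminf_le summable_norm_sqrt_term summable_mult2 summable_abs_sqrt_coeff
        norm_sqrt_term_le)
  also have "\<dots> = (\<Sum>k. \<bar>sqrt_coeff k\<bar>) * norm x"
    by (rule suminf_mult2[OF summable_abs_sqrt_coeff, symmetric])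
  also have "\<dots> \<le> 2 * norm x"
    by (intro mult_right_mono suminf_le_const summable_abs_sqrt_coeff sum_abs_sqrt_coeff_le)
      simp
  finally show "norm (modulus x) \<le> norm x * 2" by (simp add: mult.commute)
qed

lemma cinner_modulus_left: "cinner (modulus x) y = (\<Sum>k. cinner (sqrt_term k x) y)"
  unfolding modulus_def
  by (rule bounded_linear.suminf[OF bounded_bilinear.bounded_linear_left[OF bounded_bilinear_cinner]
        summable_sqrt_term])

lemma selfadjoint_modulus: "is_adjoint modulus modulus"
proof -
  have "cinner (sqrt_term k x) y = cinner x (sqrt_term k y)" for k x y
    using is_adjointD[OF is_adjoint_funpow[OF selfadjoint_defect]]
    by (simp add: sqrt_term_def cinner_scaleR_left cinner_scaleR_right)
  moreover have "cinner x (modulus y) = (\<Sum>k. cinner x (sqrt_term k y))" for x y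
    unfolding modulus_def
    by (rule bounded_linear.suminf[OF bounded_bilinear.bounded_linear_right[OF
            bounded_bilinear_cinner] summable_sqrt_term])
  ultimately show ?thesis
    unfolding is_adjoint_def by (simp add: cinner_modulus_left)
qed

text \<open>Positivity: all coefficients but the first are \<open>\<le> 0\<close> and \<open>defect\<close> is a contraction,
  so the series is bounded below by \<open>(\<Sum>k. sqrt_coeff k) * (norm x)\<^sup>2 \<ge> 0\<close>.\<close>

lemma Re_cinner_modulus_nonneg: "Re (cinner (modulus x) x) \<ge> 0"
proof -
  define r where "r k = Re (cinner ((defect ^^ k) x) x)" for k
  have summable: "summable (\<lambda>k. cinner (sqrt_term k x) x)"
    by (rule bounded_linear.summable[OF bounded_bilinear.bounded_linear_left[OF
            bounded_bilinear_cinner] summable_sqrt_term])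
  have "Re (cinner (modulus x) x) = (\<Sum>k. Re (cinner (sqrt_term k x) x))"
    unfolding cinner_modulus_left by (rule bounded_linear.suminf[OF bounded_linear_Re summable])
  also have "\<dots> = (\<Sum>k. sqrt_coeff k * r k)"
    by (simp add: sqrt_term_def cinner_scaleR_left r_def)
  finally have eq: "Re (cinner (modulus x) x) = (\<Sum>k. sqrt_coeff k * r k)" .
  have "r k \<le> (norm x)\<^sup>2" for k
    using Re_cinner_le[of "(defect ^^ k) x" x] norm_defect_funpow_le[of k x]
    by (simp add: r_def power2_eq_square mult_right_mono order_trans)
  then have le: "sqrt_coeff k * (norm x)\<^sup>2 \<le> sqrt_coeff k * r k" for k
    using sqrt_coeff_nonpos[of k]
    by (cases "k = 0") (simp_all add: r_def Re_cinner_self mult_left_mono_neg)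
  have "summable (\<lambda>k. sqrt_coeff k * r k)"
    using bounded_linear.summable[OF bounded_linear_Re summable]
    by (simp add: sqrt_term_def cinner_scaleR_left r_def)
  then have "(\<Sum>k. sqrt_coeff k) * (norm x)\<^sup>2 \<le> (\<Sum>k. sqrt_coeff k * r k)"
    using suminf_le[OF le summable_mult2[OF summable_sqrt_coeff]]
    by (simp add: suminf_mult2[OF summable_sqrt_coeff])
  moreover have "0 \<le> (\<Sum>k. sqrt_coeff k) * (norm x)\<^sup>2"
    using suminf_sqrt_coeff_nonneg by simp
  ultimately show ?thesis using eq by linarith
qed

lemma modulus_square: "modulus (modulus x) = Z (Z x)"
proof -
  have "cinner y (modulus (modulus x) - Z (Z x)) = 0" for y
  proof -
    have convolution_term: "cinner (sqrt_term i y) (sqrt_term (n - i) x)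
        = complex_of_real (sqrt_coeff i * sqrt_coeff (n - i)) * cinner y ((defect ^^ n) x)"
      if "i \<le> n" for i n
    proof -
      have "defect ^^ n = defect ^^ i \<circ> defect ^^ (n - i)"
        using that by (simp flip: funpow_add)
      then have "(defect ^^ i) ((defect ^^ (n - i)) x) = (defect ^^ n) x" by simp
      then show ?thesis
        using is_adjointD[OF is_adjoint_funpow[OF selfadjoint_defect], of i y]
        by (simp add: sqrt_term_def cinner_scaleR_left cinner_scaleR_right)
    qed
    have "cinner y (modulus (modulus x)) = cinner (modulus y) (modulus x)"
      using is_adjointD[OF selfadjoint_modulus] by simp
    also have "\<dots> = (\<Sum>n. \<Sum>i\<le>n. cinner (sqrt_term i y) (sqrt_term (n - i) x))"
      unfolding modulus_def
      by (rule sums_unique[OF Cauchy_product_sums_bounded_bilinear[OF bounded_bilinear_cinner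
              summable_norm_sqrt_term summable_norm_sqrt_term]])
    also have "\<dots> = (\<Sum>n. (if n = 0 then 1 else if n = 1 then -1 else 0) * cinner y ((defect ^^ n) x))"
    proof (rule suminf_cong)
      fix n
      have "(\<Sum>i\<le>n. cinner (sqrt_term i y) (sqrt_term (n - i) x))
          = complex_of_real (\<Sum>i\<le>n. sqrt_coeff i * sqrt_coeff (n - i)) * cinner y ((defect ^^ n) x)"
        by (simp add: convolution_term sum_distrib_right)
      then show "(\<Sum>i\<le>n. cinner (sqrt_term i y) (sqrt_term (n - i) x))
          = (if n = 0 then 1 else if n = 1 then -1 else 0) * cinner y ((defect ^^ n) x)"
        by (simp only: sqrt_coeff_convolution) simp
    qed
    also have "\<dots> = (\<Sum>n\<in>{0,1}. (if n = 0 then 1 else if n = 1 then -1 else 0) * cinner y ((defect ^^ n) x))"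
      by (rule suminf_finite) auto
    also have "\<dots> = cinner y (Z (Z x))" by (simp add: defect_def cinner_diff_right)
    finally show ?thesis by (simp add: cinner_diff_right)
  qed
  then show ?thesis using cinner_eq_zero_all by (metis eq_iff_diff_eq_0)
qed

lemma modulus_Z: "modulus (Z x) = Z (modulus x)"
  using modulus_commute[OF bounded, of x] by simp

text \<open>\<open>pos_part\<close> is twice the positive part of \<open>Z\<close>; on its range \<open>Z\<close> agrees with its modulus.\<close>

definition pos_part :: "'a \<Rightarrow> 'a" where "pos_part x = modulus x + Z x"

lemma Z_pos_part: "Z (pos_part w) = modulus (pos_part w)"
  by (simp add: pos_part_def linear_add[OF bounded_clinear_linear[OF bounded]]
      linear_add[OF bounded_clinear_linear[OF bounded_modulus]] modulus_square modulus_Z)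

lemma pos_part_commute:
  assumes B: "bounded_clinear B" and BZ: "\<And>x. B (Z x) = Z (B x)"
  shows "B (pos_part x) = pos_part (B x)"
  by (simp add: pos_part_def linear_add[OF bounded_clinear_linear[OF B]] BZ modulus_commute[OF B BZ])

lemma pos_part_nonzero:
  assumes "Re (cinner (Z y) y) > 0"
  shows "pos_part y \<noteq> 0"
proof
  assume "pos_part y = 0"
  then have "modulus y = - Z y" by (simp add: pos_part_def eq_neg_iff_add_eq_0)
  then show False
    using Re_cinner_modulus_nonneg[of y] assms by (simp add: cinner_minus_left)
qed

end

text \<open>The range of the positive part of \<open>shift = I - N\<^sup>* N / d\<close> is the spectral subspace of
  \<open>N\<^sup>* N\<close> for \<open>[0, d]\<close>, so it lies in the disc subspace of \<open>N\<close> of radius \<open>sqrt d\<close>; the bound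
  \<open>\<parallel>N\<parallel>\<^sup>2 \<le> 2 d\<close> makes \<open>shift\<close> a contraction.\<close>

locale normal_pair_shift = normal_pair +
  fixes d :: real
  assumes d_pos: "d > 0" and onorm_square_le: "(onorm N)\<^sup>2 \<le> 2 * d"
begin

definition shift :: "'a \<Rightarrow> 'a" where "shift x = x - (1/d) *\<^sub>R N' (N x)"

lemma Re_cinner_shift: "Re (cinner (shift x) x) = (norm x)\<^sup>2 - (norm (N x))\<^sup>2 / d"
  by (simp add: shift_def cinner_diff_left cinner_scaleR_left is_adjointD[OF is_adjoint_sym[OF adj]]
      Re_cinner_self)

sublocale sc: selfadjoint_contraction shift
proof
  have N'N: "bounded_clinear (\<lambda>x. N' (N x))"
    by (rule bounded_clinear_compose[OF bounded_adjoint bounded])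
  show "bounded_clinear shift"
    unfolding shift_def[abs_def] scaleR_scaleC
    by (intro bounded_clinear_diff bounded_clinear_ident
        bounded_clinear_compose[OF bounded_clinear_scaleC_right N'N])
  show "is_adjoint shift shift"
    unfolding is_adjoint_def shift_def
    by (simp add: cinner_diff_left cinner_diff_right cinner_scaleR_left cinner_scaleR_right
        is_adjointD[OF adj] is_adjointD[OF is_adjoint_sym[OF adj]])
  fix x
  have "norm (N' (N x)) \<le> onorm N * norm (N x)"
    using normal_norm_adjoint[OF adj comm, of "N x"] onorm[OF bounded_clinear_bounded_linear[OF bounded]]
    by simp
  then have "(norm (N' (N x)))\<^sup>2 \<le> (onorm N)\<^sup>2 * (norm (N x))\<^sup>2"
    by (metis power_mono norm_ge_zero power_mult_distrib)
  also have "\<dots> \<le> 2 * d * (norm (N x))\<^sup>2"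
    by (rule mult_right_mono[OF onorm_square_le]) simp
  finally have "(norm (N' (N x)))\<^sup>2 \<le> 2 * d * (norm (N x))\<^sup>2" .
  then have "(norm (N' (N x)))\<^sup>2 / d\<^sup>2 \<le> 2 * ((norm (N x))\<^sup>2 / d)"
    using d_pos by (simp add: field_simps power2_eq_square)
  moreover have "(norm (shift x))\<^sup>2
      = (norm x)\<^sup>2 - 2 * ((norm (N x))\<^sup>2 / d) + (norm (N' (N x)))\<^sup>2 / d\<^sup>2"
    using d_pos
    by (simp add: shift_def scaleR_scaleC norm_diff_scaleC_square Re_cinner_self power_divide
        norm_divide is_adjointD[OF is_adjoint_sym[OF adj]])
  ultimately have "(norm (shift x))\<^sup>2 \<le> (norm x)\<^sup>2" by linarith
  then show "norm (shift x) \<le> norm x" by (rule power2_le_imp_le) simp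
qed

lemma commute_shift: "N (shift x) = shift (N x)"
  by (simp add: shift_def linear_diff[OF bounded_clinear_linear[OF bounded]]
      linear_scale[OF bounded_clinear_linear[OF bounded]] comm)

lemma norm_N_pos_part: "norm (N (sc.pos_part w)) \<le> sqrt d * norm (sc.pos_part w)"
proof -
  let ?v = "sc.pos_part w" and ?P = "\<lambda>x. N' (N x)"
  have "0 \<le> Re (cinner (N ?v) (sc.modulus (N ?v)))"
    using sc.Re_cinner_modulus_nonneg[of "N ?v"] by (simp add: cinner_commute[of "N ?v"])
  also have "cinner (N ?v) (sc.modulus (N ?v)) = cinner (?P ?v) (sc.modulus ?v)"
    by (simp add: is_adjointD[OF is_adjoint_sym[OF adj]]
        sc.modulus_commute[OF bounded commute_shift])
  also have "sc.modulus ?v = shift ?v"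
    by (rule sc.Z_pos_part[symmetric])
  also have "\<dots> = ?v - (1/d) *\<^sub>R ?P ?v"
    by (rule shift_def)
  finally have "(norm (?P ?v))\<^sup>2 \<le> d * Re (cinner (?P ?v) ?v)"
    using d_pos by (simp add: cinner_diff_right cinner_scaleR_right Re_cinner_self field_simps)
  also have "Re (cinner (?P ?v) ?v) = (norm (N ?v))\<^sup>2"
    by (simp add: is_adjointD[OF is_adjoint_sym[OF adj]] Re_cinner_self)
  finally have "norm (?P ?v) \<le> sqrt d * norm (N ?v)"
    using d_pos by (metis real_le_rsqrt real_sqrt_mult real_sqrt_abs abs_norm_cancel
        power_mult_distrib real_sqrt_pow2 less_imp_le norm_ge_zero)
  moreover have "(norm (N ?v))\<^sup>2 \<le> norm (?P ?v) * norm ?v"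
    using Re_cinner_le[of "?P ?v" ?v]
    by (simp add: is_adjointD[OF is_adjoint_sym[OF adj]] Re_cinner_self)
  ultimately have "(norm (N ?v))\<^sup>2 \<le> sqrt d * norm (N ?v) * norm ?v"
    by (meson mult_right_mono norm_ge_zero order_trans)
  then show ?thesis
    using d_pos by (cases "N ?v = 0") (auto simp: power2_eq_square mult.assoc)
qed

lemma pos_part_in_disc_space: "sc.pos_part y \<in> disc_space N (sqrt d)"
proof -
  have pow: "(N ^^ n) (sc.pos_part y) = sc.pos_part ((N ^^ n) y)" for n
    by (rule funpow_commute[symmetric]) (simp add: sc.pos_part_commute[OF bounded commute_shift])
  have "norm ((N ^^ n) (sc.pos_part y)) \<le> sqrt d ^ n * norm (sc.pos_part y)" for n
  proof (induction n)
    case (Suc n)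
    have "norm ((N ^^ Suc n) (sc.pos_part y)) \<le> sqrt d * norm ((N ^^ n) (sc.pos_part y))"
      using norm_N_pos_part[of "(N ^^ n) y"] by (simp add: pow)
    also have "\<dots> \<le> sqrt d * (sqrt d ^ n * norm (sc.pos_part y))"
      by (rule mult_left_mono[OF Suc]) (use d_pos in simp)
    finally show ?case by (simp add: mult.assoc)
  qed simp
  then show ?thesis by (simp add: disc_space_def)
qed

end

context normal_pair
begin

lemma onorm_mult_le_norm:
  assumes trivial: "\<And>c. c \<ge> 0 \<Longrightarrow> disc_space N c = {0} \<or> disc_space N c = UNIV"
  shows "onorm N * norm y \<le> norm (N y)"
proof (rule ccontr)
  define S where "S = (onorm N)\<^sup>2"
  assume "\<not> onorm N * norm y \<le> norm (N y)"
  then have lt: "(norm (N y))\<^sup>2 < S * (norm y)\<^sup>2"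
    by (simp add: S_def power_strict_mono flip: power_mult_distrib)
  then have "y \<noteq> 0" by auto
  define q where "q = (norm (N y))\<^sup>2 / (norm y)\<^sup>2"
  define d where "d = (max q (S/2) + S) / 2"
  have "q < S" using lt \<open>y \<noteq> 0\<close> by (simp add: q_def divide_less_eq)
  moreover have "0 \<le> q" by (simp add: q_def)
  ultimately have "q < d" "S \<le> 2 * d" "d < S" "d > 0"
    by (auto simp: d_def max_def)
  interpret normal_pair_shift N N' d
    by unfold_locales (use \<open>S \<le> 2 * d\<close> \<open>d > 0\<close> in \<open>simp_all add: S_def\<close>)
  have "(norm (N y))\<^sup>2 < d * (norm y)\<^sup>2"
    using \<open>q < d\<close> \<open>y \<noteq> 0\<close> by (simp add: q_def divide_less_eq)
  then have "Re (cinner (shift y) y) > 0"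
    using \<open>d > 0\<close> by (simp add: Re_cinner_shift field_simps)
  then have "sc.pos_part y \<noteq> 0" by (rule sc.pos_part_nonzero)
  then have "disc_space N (sqrt d) = UNIV"
    using trivial[of "sqrt d"] pos_part_in_disc_space[of y] \<open>d > 0\<close> by auto
  then have "norm ((N ^^ 1) x) \<le> sqrt d ^ 1 * norm x" for x
    unfolding disc_space_def by blast
  then have "norm (N x) \<le> sqrt d * norm x" for x
    by simp
  then have "onorm N \<le> sqrt d" using \<open>d > 0\<close> by (intro onorm_bound) simp_all
  then have "S \<le> d"
    unfolding S_def using \<open>d > 0\<close> onorm_pos_le[OF bounded_clinear_bounded_linear[OF bounded]]
    by (metis power_mono real_sqrt_pow2 less_imp_le)
  with \<open>d < S\<close> show False by simp
qed

lemma modulus_scalar: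
  assumes trivial: "\<And>c. c \<ge> 0 \<Longrightarrow> disc_space N c = {0} \<or> disc_space N c = UNIV"
  shows "N' (N x) = (onorm N)\<^sup>2 *\<^sub>R x"
proof -
  let ?Q = "\<lambda>x. (onorm N)\<^sup>2 *\<^sub>R x - N' (N x)"
  have lin: "linear (\<lambda>x. N' (N x))"
    using bounded_clinear_linear[OF bounded_clinear_compose[OF bounded_adjoint bounded]] .
  have "?Q x = 0"
  proof (rule polarization_zero[where Q = ?Q])
    show "?Q (x + y) = ?Q x + ?Q y" for x y
      by (simp add: linear_add[OF lin] scaleR_add_right)
    show "?Q (c *\<^sub>C x) = c *\<^sub>C ?Q x" for c x
      by (simp add: bounded_clinear_scaleC[OF bounded] bounded_clinear_scaleC[OF bounded_adjoint]
          scaleC_diff_right scaleR_scaleC scaleC_scaleC mult.commute)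
    fix z
    have "norm (N z) = onorm N * norm z"
      using onorm_mult_le_norm[OF trivial, of z] onorm[OF bounded_clinear_bounded_linear[OF bounded]]
      by (metis antisym)
    then show "cinner z (?Q z) = 0"
      by (simp add: cinner_diff_right cinner_scaleR_right is_adjointD[OF adj, symmetric] cinner_self
          power_mult_distrib)
  qed
  then show ?thesis by simp
qed

end

lemma adjoint_commute:
  fixes A M :: "'a::complex_inner \<Rightarrow> 'a"
  assumes adjA: "is_adjoint A A'" and adjM: "is_adjoint M M'" and AM: "\<And>x. A (M x) = M (A x)"
  shows "A' (M' x) = M' (A' x)"
proof -
  have "cinner z (A' (M' x)) = cinner z (M' (A' x))" for z
    by (simp add: is_adjointD[OF adjA, symmetric] is_adjointD[OF adjM, symmetric] AM)
  then show ?thesis using cinner_eq_zero_all by (metis cinner_diff_right eq_iff_diff_eq_0)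
qed

text \<open>No Fuglede theorem is needed: \<open>A\<close> commutes with \<open>N\<close> and \<open>A\<^sup>*\<close> with \<open>N\<^sup>*\<close>, and the disc
  subspaces of \<open>N\<close> and \<open>N\<^sup>*\<close> coincide, so they reduce \<open>A\<close>.\<close>

lemma (in normal_pair) irreducible_commuting_modulus_scalar:
  assumes irr: "irreducible_op A" and A: "bounded_clinear A" and adjA: "is_adjoint A A'"
    and AN: "\<And>x. A (N x) = N (A x)" and AN': "\<And>x. A' (N' x) = N' (A' x)"
  shows "N' (N x) = (onorm N)\<^sup>2 *\<^sub>R x"
proof (rule modulus_scalar)
  fix c :: real assume "c \<ge> 0"
  show "disc_space N c = {0} \<or> disc_space N c = UNIV"
  proof (rule irreducible_reducing_subspace[OF irr A adjA closed_disc_space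
        csubspace_disc_space[OF \<open>c \<ge> 0\<close>]])
    show "A x \<in> disc_space N c" if "x \<in> disc_space N c" for x
      using disc_space_invariant[OF \<open>c \<ge> 0\<close> A AN that] .
    show "A' x \<in> disc_space N c" if "x \<in> disc_space N c" for x
      using normal_pair.disc_space_invariant[OF swap \<open>c \<ge> 0\<close>
          is_adjoint_bounded_clinear[OF A adjA] AN'] that
      by (simp add: disc_space_adjoint)
  qed
qed

text \<open>If every \<open>(M\<^sup>* - \<mu>\<^sup>*)(M - \<mu>)\<close> is a real multiple of the identity, then so are
  \<open>M + M\<^sup>*\<close> (take \<open>\<mu> = 0, 1\<close>) and \<open>\<i>(M - M\<^sup>*)\<close> (take \<open>\<mu> = 0, \<i>\<close>), hence \<open>M\<close> is scalar.\<close>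

lemma scalar_if_shifted_moduli_scalar:
  fixes M M' :: "'a::complex_vector \<Rightarrow> 'a"
  assumes M': "\<And>x y. M' (x + y) = M' x + M' y" "\<And>c x. M' (c *\<^sub>C x) = c *\<^sub>C M' x"
    and shifted: "\<And>\<mu>. \<exists>s. \<forall>x. M' (M x - \<mu> *\<^sub>C x) - cnj \<mu> *\<^sub>C (M x - \<mu> *\<^sub>C x) = s *\<^sub>R x"
  shows "\<exists>c. \<forall>x. M x = c *\<^sub>C x"
proof -
  have M'_diff: "M' (x - y) = M' x - M' y" for x y
    using M'(1)[of "x - y" y] by (simp add: algebra_simps)
  have expand: "M' (M x - \<mu> *\<^sub>C x) - cnj \<mu> *\<^sub>C (M x - \<mu> *\<^sub>C x)
      = M' (M x) - \<mu> *\<^sub>C M' x - cnj \<mu> *\<^sub>C M x + (cnj \<mu> * \<mu>) *\<^sub>C x" for \<mu> x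
    by (simp add: M'_diff M'(2) scaleC_diff_right scaleC_scaleC algebra_simps)
  obtain s0 where s0: "\<And>x. M' (M x) = s0 *\<^sub>R x"
    using shifted[of 0] by (auto simp: expand)
  obtain s1 where s1: "\<And>x. M' (M x) - M' x - M x + x = s1 *\<^sub>R x"
    using shifted[of 1] unfolding expand by (auto simp: scaleC_one)
  obtain s2 where s2: "\<And>x. M' (M x) - \<i> *\<^sub>C M' x + \<i> *\<^sub>C M x + x = s2 *\<^sub>R x"
    using shifted[of \<i>] unfolding expand by (auto simp: scaleC_one scaleC_minus_left)
  define c where "c = (complex_of_real (s0 + 1 - s1) - \<i> * complex_of_real (s2 - s0 - 1)) / 2"
  have "M x = c *\<^sub>C x" for x
  proof -
    have "M x + M' x = (s0 + 1 - s1) *\<^sub>R x"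
      using s0[of x] s1[of x] by (simp add: algebra_simps)
    then have sum: "M x + M' x = complex_of_real (s0 + 1 - s1) *\<^sub>C x"
      by (simp only: scaleR_scaleC)
    have "\<i> *\<^sub>C (M x - M' x) = (s2 - s0 - 1) *\<^sub>R x"
      using s0[of x] s2[of x] by (simp add: algebra_simps scaleC_diff_right)
    then have "(- \<i>) *\<^sub>C (\<i> *\<^sub>C (M x - M' x)) = (- \<i> * complex_of_real (s2 - s0 - 1)) *\<^sub>C x"
      by (simp add: scaleR_scaleC scaleC_scaleC)
    then have diff: "M x - M' x = (- \<i> * complex_of_real (s2 - s0 - 1)) *\<^sub>C x"
      by (simp add: scaleC_scaleC scaleC_one)
    have "(1 + 1) *\<^sub>C M x = (M x + M' x) + (M x - M' x)"
      by (simp only: scaleC_add_left scaleC_one) simp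
    also have "\<dots> = (2 * c) *\<^sub>C x"
      unfolding sum diff scaleC_add_left[symmetric] c_def by (rule arg_cong[where f="\<lambda>c. c *\<^sub>C x"]) simp
    finally have "(1/2) *\<^sub>C ((2::complex) *\<^sub>C M x) = (1/2) *\<^sub>C ((2 * c) *\<^sub>C x)"
      by simp
    then show ?thesis by (simp add: scaleC_scaleC scaleC_one)
  qed
  then show ?thesis by blast
qed

lemma commuting_normals_scalar:
  fixes A M :: "'a::chilbert_space \<Rightarrow> 'a"
  assumes irr: "irreducible_op A" and A: "bounded_clinear A" and MN: "M \<in> commuting_normals A"
  shows "\<exists>c. \<forall>x. M x = c *\<^sub>C x"
proof -
  have M: "bounded_clinear M" and MM: "M \<circ> adjoint M = adjoint M \<circ> M"
    and AM: "\<And>x. A (M x) = M (A x)"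
    using MN by (auto simp: commuting_normals_def normal_op_def fun_eq_iff)
  define M' where "M' = adjoint M"
  have adjM: "is_adjoint M M'" unfolding M'_def by (rule adjoint_exists[OF M])
  have adjA: "is_adjoint A (adjoint A)" by (rule adjoint_exists[OF A])
  have M': "bounded_clinear M'" by (rule is_adjoint_bounded_clinear[OF M adjM])
  have "\<exists>s. \<forall>x. M' (M x - \<mu> *\<^sub>C x) - cnj \<mu> *\<^sub>C (M x - \<mu> *\<^sub>C x) = s *\<^sub>R x" for \<mu>
  proof -
    interpret normal_pair "\<lambda>x. M x - \<mu> *\<^sub>C x" "\<lambda>x. M' x - cnj \<mu> *\<^sub>C x"
    proof
      show "bounded_clinear (\<lambda>x. M x - \<mu> *\<^sub>C x)"
        by (rule bounded_clinear_diff[OF M bounded_clinear_scaleC_right])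
      show "is_adjoint (\<lambda>x. M x - \<mu> *\<^sub>C x) (\<lambda>x. M' x - cnj \<mu> *\<^sub>C x)"
        unfolding is_adjoint_def
        by (simp add: is_adjointD[OF adjM] cinner_diff_left cinner_diff_right cinner_scaleC_left
            cinner_scaleC_right)
      show "M (M' x - cnj \<mu> *\<^sub>C x) - \<mu> *\<^sub>C (M' x - cnj \<mu> *\<^sub>C x)
          = M' (M x - \<mu> *\<^sub>C x) - cnj \<mu> *\<^sub>C (M x - \<mu> *\<^sub>C x)" for x
        using MM unfolding M'_def[symmetric]
        by (simp add: linear_diff[OF bounded_clinear_linear[OF M]] bounded_clinear_scaleC[OF M]
            linear_diff[OF bounded_clinear_linear[OF M']] bounded_clinear_scaleC[OF M']
            scaleC_diff_right scaleC_scaleC fun_eq_iff algebra_simps mult.commute)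
    qed
    have A': "bounded_clinear (adjoint A)" by (rule is_adjoint_bounded_clinear[OF A adjA])
    have "M' (M x - \<mu> *\<^sub>C x) - cnj \<mu> *\<^sub>C (M x - \<mu> *\<^sub>C x)
        = (onorm (\<lambda>x. M x - \<mu> *\<^sub>C x))\<^sup>2 *\<^sub>R x" for x
      by (rule irreducible_commuting_modulus_scalar[OF irr A adjA])
        (simp_all add: linear_diff[OF bounded_clinear_linear[OF A]] bounded_clinear_scaleC[OF A]
          linear_diff[OF bounded_clinear_linear[OF A']] bounded_clinear_scaleC[OF A'] AM
          adjoint_commute[OF adjA adjM AM])
    then show ?thesis by blast
  qed
  then show ?thesis
    using scalar_if_shifted_moduli_scalar[of M' M] M'
    by (simp add: linear_add[OF bounded_clinear_linear] bounded_clinear_scaleC)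
qed

lemma scaleC_in_commuting_normals:
  fixes A :: "'a::chilbert_space \<Rightarrow> 'a"
  assumes A: "bounded_clinear A"
  shows "(\<lambda>x. c *\<^sub>C x) \<in> commuting_normals A"
proof -
  have "is_adjoint (\<lambda>x::'a. c *\<^sub>C x) (\<lambda>x. cnj c *\<^sub>C x)"
    unfolding is_adjoint_def by (simp add: cinner_scaleC_left cinner_scaleC_right)
  then have "adjoint (\<lambda>x::'a. c *\<^sub>C x) = (\<lambda>x. cnj c *\<^sub>C x)" by (rule adjoint_eqI)
  then show ?thesis
    unfolding commuting_normals_def normal_op_def
    by (simp add: bounded_clinear_scaleC_right fun_eq_iff scaleC_scaleC mult.commute
        bounded_clinear_scaleC[OF A])
qed

theorem proposition2:
  fixes A :: "'a::chilbert_space \<Rightarrow> 'a"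
  assumes "bounded_clinear A"
    and "irreducible_op A"
  shows "(INF M\<in>commuting_normals A. onorm (\<lambda>x. A x + M x))
       = (INF c::complex. onorm (\<lambda>x. A x - c *\<^sub>C x))"
proof -
  note A = assms(1) and irr = assms(2)
  have scalars: "commuting_normals A = range (\<lambda>c x. c *\<^sub>C x)"
  proof (intro equalityI subsetI)
    fix M assume "M \<in> commuting_normals A"
    then obtain c where "\<forall>x. M x = c *\<^sub>C x" using commuting_normals_scalar[OF irr A] by blast
    then show "M \<in> range (\<lambda>c x. c *\<^sub>C x)" by (auto simp: fun_eq_iff)
  qed (use scaleC_in_commuting_normals[OF A] in auto)
  have "(INF M\<in>commuting_normals A. onorm (\<lambda>x. A x + M x)) = (INF c. onorm (\<lambda>x. A x + c *\<^sub>C x))"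
    by (simp add: scalars image_image)
  also have "\<dots> = (INF c. onorm (\<lambda>x. A x - (- c) *\<^sub>C x))"
    by (simp add: scaleC_minus_left)
  also have "\<dots> = (INF c. onorm (\<lambda>x. A x - c *\<^sub>C x))"
    using image_image[of "\<lambda>c. onorm (\<lambda>x. A x - c *\<^sub>C x)" uminus UNIV] by simp
  finally show ?thesis .
qed

end
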